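(* Let $\Sigma=(I,X,\mathcal U,\phi,Y,h)$ be a forward complete control system with outputs. Then the following are equivalent: (1) $\Sigma$ is OUAG and BORS; (2) $\Sigma$ is OGUAG and OUGB; (3) $\Sigma$ is OCAG. Moreover, any of these properties implies that $\Sigma$ is IOpS.
   Context: Let $I\in\{\mathbb N_0,\mathbb R_0^+\}$. A forward complete control system with outputs $\Sigma=(I,X,\mathcal U,\phi,Y,h)$ consists of: a normed space $(X,\|\cdot\|_X)$; a vector space $U$ and a normed linear subspace $(\mathcal U,\|\cdot\|_{\mathcal U})$ of $\{u:I\to U\}$ such that for all $u\in\mathcal U$ and $\tau\in I$, $u(\cdot+\tau)\in\mathcal U$ with $\|u(\cdot+\tau)\|_{\mathcal U}\le\|u\|_{\mathcal U}$, and for all $t_2\ge t_1\ge 0$ the function $u|_{[t_1,t_2]}$ (equal to $u$ on $[t_1,t_2]$, $0$ elsewhere) lies in $\mathcal U$ with $\|u|_{[t_1,t_2]}\|_{\mathcal U}\le\|u\|_{\mathcal U}$; a map $\phi:I\times X\times\mathcal U\to X$ with $\phi(0,x,u)=x$, causality (if $u,\tilde u$ agree on $[0,t]$ then $\phi(t,x,u)=\phi(t,x,\tilde u)$), and cocycle property $\phi(t+s,x,u)=\phi(s,\phi(t,x,u),u(t+\cdot))$; a normed space $Y$ and $h:X\times U\to Y$. Write $y(t,x,u)=h(\phi(t,x,u),u(t))$, $B_r=\{x:\|x\|_X<r\}$, $B_{r,\mathcal U}=\{u:\|u\|_{\mathcal U}<r\}$. $\mathcal K,\mathcal K_\infty,\mathcal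 L,\mathcal{KL}$ are the standard comparison function classes ($\mathcal K$: continuous, strictly increasing, zero at zero; $\mathcal K_\infty$: unbounded $\mathcal K$; $\mathcal{KL}$: $\mathcal K$ in first argument, continuous decreasing to $0$ in the second). OUAG: $\exists\gamma\in\mathcal K_\infty$ such that for all $\varepsilon,r,s>0$ there is $\tau\in I$ with $\|y(t,x,u)\|_Y\le\varepsilon+\gamma(\|u\|_{\mathcal U})$ for all $x\in B_r,u\in B_{s,\mathcal U},t\ge\tau$. OGUAG: $\exists\gamma\in\mathcal K_\infty$ such that for all $\varepsilon,r>0$ there is $\tau\in I$ with $\|y(t,x,u)\|_Y\le\varepsilon+\gamma(\|u\|_{\mathcal U})$ for all $x\in B_r,u\in\mathcal U,t\ge\tau$. BORS: for all $C>0,\tau\in I$: $\sup\{\|y(t,x,u)\|_Y:\|x\|_X<C,\|u\|_{\mathcal U}<C,t<\tau\}<\infty$. OUGB: $\exists\sigma,\gamma\in\mathcal K_\infty,c>0$ with $\|y(t,x,u)\|_Y\le\sigma(\|x\|_X)+\gamma(\|u\|_{\mathcal U})+c$ for all $x,u,t$. OCAG: $\exists\beta\in\mathcal{KL},\gamma\in\mathcal K_\infty,c\ge0$ with $\|y(t,x,u)\|_Y\le\beta(\|x\|_X+c,t)+\gamma(\|u\|_{\mathcal U})$ for all $x,u,t$. IOpS: $\exists\beta\in\mathcal{KL},\gamma\in\mathcal K_\infty,c\ge0$ with $\|y(t,x,u)\|_Y\le\beta(\|x\|_X,t)+\gamma(\|u\|_{\mathcal U})+c$ for all $x,u,t$.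 *)

theory Defs
  imports "HOL-Analysis.Analysis"
begin

definition class_K :: "(real \<Rightarrow> real) \<Rightarrow> bool" where
  "class_K f \<longleftrightarrow> continuous_on {0..} f \<and> strict_mono_on {0..} f \<and> f 0 = 0"

definition class_Kinf :: "(real \<Rightarrow> real) \<Rightarrow> bool" where
  "class_Kinf f \<longleftrightarrow> class_K f \<and> filterlim f at_top at_top"

definition class_L :: "(real \<Rightarrow> real) \<Rightarrow> bool" where
  "class_L g \<longleftrightarrow> continuous_on {0..} g \<and> antimono_on {0..} g \<and> (g \<longlongrightarrow> 0) at_top"

definition class_KL :: "(real \<Rightarrow> real \<Rightarrow> real) \<Rightarrow> bool" where
  "class_KL \<beta> \<longleftrightarrow> (\<forall>t\<ge>0. class_K (\<lambda>r. \<beta> r t)) \<and> (\<forall>r>0. class_L (\<lambda>t. \<beta> r t))"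

text \<open>The time domain I is modelled as a set T of reals, either [0,\<infinity>) or the naturals.
  Inputs are functions real \<Rightarrow> 'u which vanish outside T (so they represent functions T \<Rightarrow> U).\<close>

definition time_domain :: "real set \<Rightarrow> bool" where
  "time_domain T \<longleftrightarrow> T = {0..} \<or> T = range real"

definition shift_input :: "real set \<Rightarrow> (real \<Rightarrow> 'u::real_vector) \<Rightarrow> real \<Rightarrow> (real \<Rightarrow> 'u)" where
  "shift_input T u \<tau> = (\<lambda>t. if t \<in> T then u (t + \<tau>) else 0)"

definition restrict_input :: "(real \<Rightarrow> 'u::real_vector) \<Rightarrow> real \<Rightarrow> real \<Rightarrow> (real \<Rightarrow> 'u)" where
  "restrict_input u t1 t2 = (\<lambda>t. if t1 \<le> t \<and> t \<le> t2 then u t else 0)"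

definition normed_input_space ::
  "real set \<Rightarrow> (real \<Rightarrow> 'u::real_vector) set \<Rightarrow> ((real \<Rightarrow> 'u) \<Rightarrow> real) \<Rightarrow> bool" where
  "normed_input_space T UU nU \<longleftrightarrow>
     (\<forall>u\<in>UU. \<forall>t. t \<notin> T \<longrightarrow> u t = 0) \<and>
     (\<lambda>_. 0) \<in> UU \<and>
     (\<forall>u\<in>UU. \<forall>v\<in>UU. (\<lambda>t. u t + v t) \<in> UU) \<and>
     (\<forall>u\<in>UU. \<forall>c. (\<lambda>t. c *\<^sub>R u t) \<in> UU) \<and>
     (\<forall>u\<in>UU. nU u \<ge> 0) \<and>
     (\<forall>u\<in>UU. nU u = 0 \<longleftrightarrow> u = (\<lambda>_. 0)) \<and>
     (\<forall>u\<in>UU. \<forall>v\<in>UU. nU (\<lambda>t. u t + v t) \<le> nU u + nU v) \<and>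
     (\<forall>u\<in>UU. \<forall>c. nU (\<lambda>t. c *\<^sub>R u t) = \<bar>c\<bar> * nU u)"

definition control_system ::
  "real set \<Rightarrow> (real \<Rightarrow> 'u::real_vector) set \<Rightarrow> ((real \<Rightarrow> 'u) \<Rightarrow> real)
   \<Rightarrow> (real \<Rightarrow> 'x::real_normed_vector \<Rightarrow> (real \<Rightarrow> 'u) \<Rightarrow> 'x) \<Rightarrow> bool" where
  "control_system T UU nU \<phi> \<longleftrightarrow>
     time_domain T \<and> normed_input_space T UU nU \<and>
     (\<forall>u\<in>UU. \<forall>\<tau>\<in>T. shift_input T u \<tau> \<in> UU \<and> nU (shift_input T u \<tau>) \<le> nU u) \<and>
     (\<forall>u\<in>UU. \<forall>t1\<in>T. \<forall>t2\<in>T. t1 \<le> t2 \<longrightarrow>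
         restrict_input u t1 t2 \<in> UU \<and> nU (restrict_input u t1 t2) \<le> nU u) \<and>
     (\<forall>x u. u \<in> UU \<longrightarrow> \<phi> 0 x u = x) \<and>
     (\<forall>t\<in>T. \<forall>x u v. u \<in> UU \<longrightarrow> v \<in> UU \<longrightarrow> (\<forall>s\<in>T. s \<le> t \<longrightarrow> u s = v s)
         \<longrightarrow> \<phi> t x u = \<phi> t x v) \<and>
     (\<forall>t\<in>T. \<forall>s\<in>T. \<forall>x u. u \<in> UU \<longrightarrow>
         \<phi> (t + s) x u = \<phi> s (\<phi> t x u) (shift_input T u t))"

definition sys_output :: "(real \<Rightarrow> 'x \<Rightarrow> (real \<Rightarrow> 'u) \<Rightarrow> 'x) \<Rightarrow> ('x \<Rightarrow> 'u \<Rightarrow> 'y)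
   \<Rightarrow> real \<Rightarrow> 'x \<Rightarrow> (real \<Rightarrow> 'u) \<Rightarrow> 'y" where
  "sys_output \<phi> h t x u = h (\<phi> t x u) (u t)"

definition OUAG where
  "OUAG T UU nU \<phi> h \<longleftrightarrow> (\<exists>\<gamma>. class_Kinf \<gamma> \<and>
     (\<forall>\<epsilon>>0. \<forall>r>0. \<forall>s>0. \<exists>\<tau>\<in>T. \<forall>x u t. norm x < r \<and> u \<in> UU \<and> nU u < s \<and> t \<in> T \<and> t \<ge> \<tau>
        \<longrightarrow> norm (sys_output \<phi> h t x u) \<le> \<epsilon> + \<gamma> (nU u)))"

definition OGUAG where
  "OGUAG T UU nU \<phi> h \<longleftrightarrow> (\<exists>\<gamma>. class_Kinf \<gamma> \<and>
     (\<forall>\<epsilon>>0. \<forall>r>0. \<exists>\<tau>\<in>T. \<forall>x u t. norm x < r \<and> u \<in> UU \<and> t \<in> T \<and> t \<ge> \<tau>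
        \<longrightarrow> norm (sys_output \<phi> h t x u) \<le> \<epsilon> + \<gamma> (nU u)))"

definition BORS where
  "BORS T UU nU \<phi> h \<longleftrightarrow> (\<forall>C>0. \<forall>\<tau>\<in>T. \<exists>M. \<forall>x u t.
     norm x < C \<and> u \<in> UU \<and> nU u < C \<and> t \<in> T \<and> t < \<tau> \<longrightarrow> norm (sys_output \<phi> h t x u) \<le> M)"

definition OUGB where
  "OUGB T UU nU \<phi> h \<longleftrightarrow> (\<exists>\<sigma> \<gamma> c. class_Kinf \<sigma> \<and> class_Kinf \<gamma> \<and> c > 0 \<and>
     (\<forall>x u t. u \<in> UU \<and> t \<in> T \<longrightarrow>
        norm (sys_output \<phi> h t x u) \<le> \<sigma> (norm x) + \<gamma> (nU u) + c))"

definition OCAG where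
  "OCAG T UU nU \<phi> h \<longleftrightarrow> (\<exists>\<beta> \<gamma> c. class_KL \<beta> \<and> class_Kinf \<gamma> \<and> c \<ge> 0 \<and>
     (\<forall>x u t. u \<in> UU \<and> t \<in> T \<longrightarrow>
        norm (sys_output \<phi> h t x u) \<le> \<beta> (norm x + c) t + \<gamma> (nU u)))"

definition IOpS where
  "IOpS T UU nU \<phi> h \<longleftrightarrow> (\<exists>\<beta> \<gamma> c. class_KL \<beta> \<and> class_Kinf \<gamma> \<and> c \<ge> 0 \<and>
     (\<forall>x u t. u \<in> UU \<and> t \<in> T \<longrightarrow>
        norm (sys_output \<phi> h t x u) \<le> \<beta> (norm x) t + \<gamma> (nU u) + c))"

end

theory Submission
  imports Defs
begin

(* The implications OGUAG ==> OUAG, OUGB ==> BORS and OCAG ==> OGUAG, OUGB, IOpS are direct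
   estimates, the last one via beta(r + c, t) <= beta(2r, t) + beta(2c, 0). The substance lies in
   turning bounds that are only known on balls into comparison functions, which is done with
   continuous sums of ramps. Bounds M_n on the balls of radius n + 1 (from OUAG and BORS) are
   dominated by the K-infinity function r + sum_n ramp(r - n) |M_(n+1)|, which gives OUGB. For
   OGUAG and OUGB ==> OCAG, the attractivity on the ball of radius n + 1 is first dominated by a
   continuous decreasing staircase g_n tending to 0, and the g_n are then glued into the
   KL function beta(s, t) = s exp(-t) + sum_n ramp(s - n) g_n(t). *)

section \<open>Comparison functions\<close>

lemma class_K_nonneg: "class_K f \<Longrightarrow> 0 \<le> r \<Longrightarrow> 0 \<le> f r"
  unfolding class_K_def
  by (metis atLeast_iff order.order_iff_strict order_refl strict_mono_onD)

lemma class_K_mono: "class_K f \<Longrightarrow> 0 \<le> a \<Longrightarrow> a \<le> b \<Longrightarrow> f a \<le> f b"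
  unfolding class_K_def
  by (metis atLeast_iff order.order_iff_strict order_trans strict_mono_onD)

lemma class_K_add_mono:
  assumes f: "class_K f" and g: "continuous_on {0..} g" "mono_on {0..} g" "g 0 = 0"
  shows "class_K (\<lambda>r. f r + g r)"
  unfolding class_K_def
proof (intro conjI)
  have "continuous_on {0..} f" using f unfolding class_K_def by blast
  then show "continuous_on {0..} (\<lambda>r. f r + g r)" using g(1) by (rule continuous_on_add)
  show "strict_mono_on {0..} (\<lambda>r. f r + g r)"
  proof (rule strict_mono_onI)
    fix r s :: real assume "r \<in> {0..}" "s \<in> {0..}" "r < s"
    then show "f r + g r < f s + g s"
      using f g(2) unfolding class_K_def
      by (intro add_less_le_mono) (auto intro: strict_mono_onD mono_onD)
  qed
qed (use f g(3) in \<open>simp add: class_K_def\<close>)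

lemma class_K_add: "class_K f \<Longrightarrow> class_K g \<Longrightarrow> class_K (\<lambda>r. f r + g r)"
  by (rule class_K_add_mono) (auto simp: class_K_def intro: strict_mono_on_imp_mono_on)

lemma class_Kinf_add:
  assumes f: "class_Kinf f" and g: "class_K g"
  shows "class_Kinf (\<lambda>r. f r + g r)"
proof -
  have "eventually (\<lambda>r. f r \<le> f r + g r) at_top"
    using eventually_ge_at_top[of 0] by eventually_elim (use class_K_nonneg g in auto)
  then have "filterlim (\<lambda>r. f r + g r) at_top at_top"
    using f unfolding class_Kinf_def by (blast intro: filterlim_at_top_mono)
  then show ?thesis
    using f g class_K_add unfolding class_Kinf_def by blast
qed

lemma class_Kinf_ident: "class_Kinf (\<lambda>r. r)"
  unfolding class_Kinf_def class_K_def
  by (auto intro!: strict_mono_onI filterlim_ident)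

lemma class_K_scale:
  assumes f: "class_K f" and a: "0 < a"
  shows "class_K (\<lambda>r. f (a * r))"
  unfolding class_K_def
proof (intro conjI)
  have "continuous_on {0..} f" using f unfolding class_K_def by blast
  then show "continuous_on {0..} (\<lambda>r. f (a * r))"
    by (rule continuous_on_compose2) (use a in \<open>auto intro!: continuous_intros\<close>)
  show "strict_mono_on {0..} (\<lambda>r. f (a * r))"
  proof (rule strict_mono_onI)
    fix r s :: real assume "r \<in> {0..}" "s \<in> {0..}" "r < s"
    then show "f (a * r) < f (a * s)"
      using f a unfolding class_K_def by (intro strict_mono_onD[of "{0..}" f]) auto
  qed
qed (use f in \<open>simp add: class_K_def\<close>)

lemma class_K_add_le:
  assumes "class_K f" "0 \<le> a" "0 \<le> b"
  shows "f (a + b) \<le> f (2 * a) + f (2 * b)"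
proof -
  have "f (a + b) \<le> f (2 * max a b)"
    using assms by (intro class_K_mono[OF assms(1)]) auto
  also have "\<dots> \<le> f (2 * a) + f (2 * b)"
    using assms class_K_nonneg[of f "2 * a"] class_K_nonneg[of f "2 * b"] by (auto simp: max_def)
  finally show ?thesis .
qed

lemma class_L_nonneg:
  assumes g: "class_L g" and t: "0 \<le> t"
  shows "0 \<le> g t"
proof (rule tendsto_upperbound)
  show "(g \<longlongrightarrow> 0) at_top" using g unfolding class_L_def by blast
  have anti: "antimono_on {0..} g" using g unfolding class_L_def by blast
  have "g s \<le> g t" if "t \<le> s" for s using monotone_onD[OF anti, of t s] that t by simp
  then show "eventually (\<lambda>s. g s \<le> g t) at_top" by (auto simp: eventually_at_top_linorder)
qed simp

lemma class_KL_K: "class_KL \<beta> \<Longrightarrow> 0 \<le> t \<Longrightarrow> class_K (\<lambda>r. \<beta> r t)"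
  unfolding class_KL_def by blast

lemma class_KL_antimono:
  assumes "class_KL \<beta>" "0 \<le> r" "0 \<le> t" "t \<le> t'"
  shows "\<beta> r t' \<le> \<beta> r t"
proof (cases "r = 0")
  case True
  then show ?thesis using assms unfolding class_KL_def class_K_def by auto
next
  case False
  then have "antimono_on {0..} (\<beta> r)" using assms unfolding class_KL_def class_L_def by auto
  then show ?thesis using monotone_onD[of "{0..}" _ _ "\<beta> r" t t'] assms by simp
qed

lemma class_KL_scale: "class_KL \<beta> \<Longrightarrow> 0 < a \<Longrightarrow> class_KL (\<lambda>r t. \<beta> (a * r) t)"
  unfolding class_KL_def using class_K_scale by auto

section \<open>Ramp sums and majorants\<close>

definition ramp :: "real \<Rightarrow> real" where
  "ramp x = min 1 (max 0 x)"

lemma continuous_on_ramp [continuous_intros]: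
  "continuous_on S f \<Longrightarrow> continuous_on S (\<lambda>x. ramp (f x))"
  unfolding ramp_def by (intro continuous_intros)

lemma ramp_mono: "x \<le> y \<Longrightarrow> ramp x \<le> ramp y"
  unfolding ramp_def by auto

lemma ramp_nonneg: "0 \<le> ramp x"
  unfolding ramp_def by auto

lemma ramp_le_one: "ramp x \<le> 1"
  unfolding ramp_def by auto

lemma ramp_eq_0: "x \<le> 0 \<Longrightarrow> ramp x = 0"
  unfolding ramp_def by auto

lemma ramp_eq_1: "1 \<le> x \<Longrightarrow> ramp x = 1"
  unfolding ramp_def by auto

text \<open>When \<open>real k \<le> a k\<close>, the
  terms with \<open>s \<le> k\<close> vanish, so summing up to \<open>\<lceil>s\<rceil>\<close> represents a locally finite series.\<close>

definition ramp_sum :: "(nat \<Rightarrow> real) \<Rightarrow> (nat \<Rightarrow> real) \<Rightarrow> real \<Rightarrow> real" where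
  "ramp_sum a w s = (\<Sum>k<nat \<lceil>s\<rceil>. ramp (s - a k) * w k)"

lemma ramp_sum_eq_sum:
  assumes a: "\<And>k. real k \<le> a k" and N: "\<And>k. N \<le> k \<Longrightarrow> s \<le> a k"
  shows "ramp_sum a w s = (\<Sum>k<N. ramp (s - a k) * w k)"
proof -
  define M where "M = max N (nat \<lceil>s\<rceil>)"
  have vanish: "ramp (s - a k) = 0" if "N \<le> k \<or> s \<le> real k" for k
  proof -
    have "s \<le> a k" using that N a[of k] by force
    then show ?thesis by (simp add: ramp_eq_0)
  qed
  have "ramp_sum a w s = (\<Sum>k<M. ramp (s - a k) * w k)"
    unfolding ramp_sum_def M_def by (rule sum.mono_neutral_left) (auto intro!: vanish)
  also have "\<dots> = (\<Sum>k<N. ramp (s - a k) * w k)"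
    unfolding M_def by (rule sum.mono_neutral_right) (auto intro!: vanish)
  finally show ?thesis .
qed

lemma isCont_ramp_sum:
  assumes a: "\<And>k. real k \<le> a k"
  shows "isCont (ramp_sum a w) s"
proof -
  define N where "N = nat \<lceil>s\<rceil> + 1"
  have "s < real N" unfolding N_def by linarith
  then have "eventually (\<lambda>s'. s' < real N) (nhds s)"
    by (rule eventually_nhds_in_open[of "{..<real N}", simplified])
  then have near: "eventually (\<lambda>s'. ramp_sum a w s' = (\<Sum>k<N. ramp (s' - a k) * w k)) (nhds s)"
  proof eventually_elim
    case (elim s')
    show ?case
      using elim a by (intro ramp_sum_eq_sum a)
        (meson less_le_trans of_nat_le_iff order.strict_implies_order)
  qed
  have "isCont (\<lambda>s'. \<Sum>k<N. ramp (s' - a k) * w k) s"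
    by (intro continuous_on_interior[of UNIV] continuous_intros) auto
  then show ?thesis using isCont_cong[OF near] by simp
qed

lemma ramp_sum_mono:
  assumes a: "\<And>k. real k \<le> a k" and w: "\<And>k. 0 \<le> w k" and "s \<le> s'"
  shows "ramp_sum a w s \<le> ramp_sum a w s'"
proof -
  have "ramp_sum a w s = (\<Sum>k<nat \<lceil>s'\<rceil>. ramp (s - a k) * w k)"
    using assms by (intro ramp_sum_eq_sum a)
      (meson dual_order.trans le_nat_iff real_nat_ceiling_ge of_nat_le_iff)
  also have "\<dots> \<le> ramp_sum a w s'"
    unfolding ramp_sum_def using assms by (intro sum_mono mult_right_mono ramp_mono) auto
  finally show ?thesis .
qed

lemma ramp_sum_nonneg: "(\<And>k. 0 \<le> w k) \<Longrightarrow> 0 \<le> ramp_sum a w s"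
  unfolding ramp_sum_def by (intro sum_nonneg mult_nonneg_nonneg ramp_nonneg)

lemma ramp_sum_ge_weight:
  assumes w: "\<And>k. 0 \<le> w k" and n: "real n \<le> a n" "a n + 1 \<le> s"
  shows "w n \<le> ramp_sum a w s"
proof -
  have "w n = ramp (s - a n) * w n" using n by (simp add: ramp_eq_1)
  also have "\<dots> \<le> ramp_sum a w s"
    unfolding ramp_sum_def using n
    by (intro member_le_sum mult_nonneg_nonneg ramp_nonneg w) (auto, linarith)
  finally show ?thesis .
qed

lemma class_K_add_ramp_sum:
  assumes f: "class_K f" and w: "\<And>k. 0 \<le> w k"
  shows "class_K (\<lambda>s. f s + ramp_sum real w s)"
proof (rule class_K_add_mono[OF f])
  show "continuous_on {0..} (ramp_sum real w)"
    by (intro continuous_at_imp_continuous_on ballI isCont_ramp_sum) simp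
  show "mono_on {0..} (ramp_sum real w)"
    by (intro mono_onI ramp_sum_mono w) simp_all
qed (simp add: ramp_sum_def)

lemma class_Kinf_majorant:
  fixes a :: "nat \<Rightarrow> real"
  assumes a: "\<And>n. 0 \<le> a n"
  obtains \<sigma> where "class_Kinf \<sigma>" "\<And>n r. real n + 1 \<le> r \<Longrightarrow> a n \<le> \<sigma> r"
proof
  define \<sigma> where "\<sigma> = (\<lambda>r. r + ramp_sum real a r)"
  have "class_K \<sigma>"
    unfolding \<sigma>_def using class_Kinf_ident a by (intro class_K_add_ramp_sum) (auto simp: class_Kinf_def)
  moreover have "filterlim \<sigma> at_top at_top"
    unfolding \<sigma>_def using ramp_sum_nonneg[OF a]
    by (intro filterlim_at_top_mono[OF filterlim_ident]) auto
  ultimately show "class_Kinf \<sigma>" unfolding class_Kinf_def by blast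
  show "a n \<le> \<sigma> r" if "real n + 1 \<le> r" for n r
    using ramp_sum_ge_weight[of a n real r] a that unfolding \<sigma>_def by simp
qed

lemma class_KL_majorant:
  assumes g: "\<And>n. class_L (g n)"
  obtains \<beta> where "class_KL \<beta>" "\<And>n s t. real n + 1 \<le> s \<Longrightarrow> 0 \<le> t \<Longrightarrow> g n t \<le> \<beta> s t"
proof
  \<comment> \<open>The ramp sum is only weakly increasing in \<open>s\<close>; the first summand makes \<open>\<beta>\<close> strictly so.\<close>
  define \<beta> where "\<beta> = (\<lambda>s t. s * exp (- t) + ramp_sum real (\<lambda>k. g k t) s)"
  have g_nonneg: "0 \<le> g k t" if "0 \<le> t" for k t
    using class_L_nonneg[OF g that] .
  have "class_K (\<lambda>s. \<beta> s t)" if t: "0 \<le> t" for t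
  proof -
    have "class_K (\<lambda>s. s * exp (- t))"
      unfolding class_K_def by (auto intro!: continuous_intros strict_mono_onI)
    then show ?thesis
      unfolding \<beta>_def using g_nonneg[OF t] by (rule class_K_add_ramp_sum)
  qed
  moreover have "class_L (\<lambda>t. \<beta> s t)" if s: "0 < s" for s
  proof -
    define N where "N = nat \<lceil>s\<rceil>"
    have \<beta>_eq: "\<beta> s = (\<lambda>t. s * exp (- t) + (\<Sum>k<N. ramp (s - real k) * g k t))"
      unfolding \<beta>_def ramp_sum_def N_def ..
    have "continuous_on {0..} (\<beta> s)"
      using g unfolding \<beta>_eq class_L_def by (intro continuous_intros) auto
    moreover have "antimono_on {0..} (\<beta> s)"
    proof (rule monotone_onI)
      fix t t' :: real assume "t \<in> {0..}" "t' \<in> {0..}" "t \<le> t'"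
      then have "g k t' \<le> g k t" for k
        using g[of k] monotone_onD[of "{0..}" _ _ "g k" t t'] unfolding class_L_def by auto
      then show "\<beta> s t' \<le> \<beta> s t"
        unfolding \<beta>_eq using s \<open>t \<le> t'\<close>
        by (intro add_mono sum_mono mult_left_mono ramp_nonneg) auto
    qed
    moreover have "(\<beta> s \<longlongrightarrow> s * 0 + (\<Sum>k<N. ramp (s - real k) * 0)) at_top"
      using g unfolding \<beta>_eq class_L_def
      by (intro tendsto_intros filterlim_compose[OF exp_at_bot filterlim_uminus_at_bot_at_top]) auto
    ultimately show ?thesis unfolding class_L_def by simp
  qed
  ultimately show "class_KL \<beta>" unfolding class_KL_def by blast
  show "g n t \<le> \<beta> s t" if "real n + 1 \<le> s" "0 \<le> t" for n s t
  proof -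
    have "g n t \<le> ramp_sum real (\<lambda>k. g k t) s"
      by (rule ramp_sum_ge_weight) (use g_nonneg that in auto)
    moreover have "0 \<le> s * exp (- t)" using that by simp
    ultimately show ?thesis unfolding \<beta>_def by linarith
  qed
qed

text \<open>A continuous staircase descending from \<open>\<epsilon> K\<close> to \<open>\<epsilon> (Suc K)\<close> on \<open>[\<theta> K, \<theta> K + 1]\<close>.\<close>

definition ramp_stairs :: "(nat \<Rightarrow> real) \<Rightarrow> (nat \<Rightarrow> real) \<Rightarrow> real \<Rightarrow> real" where
  "ramp_stairs \<theta> \<epsilon> t = \<epsilon> 0 - ramp_sum \<theta> (\<lambda>k. \<epsilon> k - \<epsilon> (Suc k)) t"

lemma ramp_stairs_ge:
  assumes \<theta>: "incseq \<theta>" "\<And>k. real k \<le> \<theta> k" and \<epsilon>: "decseq \<epsilon>" and t: "t \<le> \<theta> K"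
  shows "\<epsilon> K \<le> ramp_stairs \<theta> \<epsilon> t"
proof -
  have "ramp_sum \<theta> (\<lambda>k. \<epsilon> k - \<epsilon> (Suc k)) t = (\<Sum>k<K. ramp (t - \<theta> k) * (\<epsilon> k - \<epsilon> (Suc k)))"
    using t \<theta> by (intro ramp_sum_eq_sum) (auto intro: order_trans monoD)
  also have "\<dots> \<le> (\<Sum>k<K. \<epsilon> k - \<epsilon> (Suc k))"
    using decseqD[OF \<epsilon>] by (intro sum_mono mult_left_le_one_le ramp_nonneg ramp_le_one) simp_all
  also have "\<dots> = \<epsilon> 0 - \<epsilon> K"
    by (rule sum_lessThan_telescope')
  finally show ?thesis unfolding ramp_stairs_def by linarith
qed

lemma ramp_stairs_le:
  assumes \<theta>: "incseq \<theta>" "\<And>k. real k \<le> \<theta> k" and \<epsilon>: "decseq \<epsilon>" and t: "\<theta> K + 1 \<le> t"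
  shows "ramp_stairs \<theta> \<epsilon> t \<le> \<epsilon> (Suc K)"
proof -
  have "\<epsilon> 0 - \<epsilon> (Suc K) = (\<Sum>k<Suc K. \<epsilon> k - \<epsilon> (Suc k))"
    by (rule sum_lessThan_telescope'[symmetric])
  also have "\<dots> = (\<Sum>k<Suc K. ramp (t - \<theta> k) * (\<epsilon> k - \<epsilon> (Suc k)))"
  proof (rule sum.cong)
    fix k assume "k \<in> {..<Suc K}"
    then have "\<theta> k + 1 \<le> t" using t monoD[OF \<theta>(1), of k K] by auto
    then show "\<epsilon> k - \<epsilon> (Suc k) = ramp (t - \<theta> k) * (\<epsilon> k - \<epsilon> (Suc k))"
      by (simp add: ramp_eq_1)
  qed simp
  also have "\<dots> \<le> ramp_sum \<theta> (\<lambda>k. \<epsilon> k - \<epsilon> (Suc k)) t"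
    unfolding ramp_sum_def using t \<theta>(2)[of K] decseqD[OF \<epsilon>]
    by (intro sum_mono2 mult_nonneg_nonneg ramp_nonneg) (auto, linarith)
  finally show ?thesis unfolding ramp_stairs_def by linarith
qed

lemma class_L_ramp_stairs:
  assumes \<theta>: "incseq \<theta>" "\<And>k. real k \<le> \<theta> k" and \<epsilon>: "decseq \<epsilon>" "\<epsilon> \<longlonglongrightarrow> 0"
  shows "class_L (ramp_stairs \<theta> \<epsilon>)"
  unfolding class_L_def
proof (intro conjI)
  have d: "0 \<le> \<epsilon> k - \<epsilon> (Suc k)" for k using decseqD[OF \<epsilon>(1), of k "Suc k"] by simp
  show "continuous_on {0..} (ramp_stairs \<theta> \<epsilon>)"
    unfolding ramp_stairs_def
    by (intro continuous_at_imp_continuous_on ballI continuous_intros isCont_ramp_sum \<theta>)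
  show "antimono_on {0..} (ramp_stairs \<theta> \<epsilon>)"
    unfolding ramp_stairs_def
    by (intro monotone_onI diff_left_mono ramp_sum_mono \<theta> d) auto
  show "(ramp_stairs \<theta> \<epsilon> \<longlongrightarrow> 0) at_top"
  proof (rule order_tendstoI)
    fix a :: real assume "a < 0"
    have "\<epsilon> (nat \<lceil>t\<rceil>) \<le> ramp_stairs \<theta> \<epsilon> t" for t
      using \<theta>(2)[of "nat \<lceil>t\<rceil>"] by (intro ramp_stairs_ge \<theta> \<epsilon>) linarith
    moreover have "0 \<le> \<epsilon> k" for k using decseq_ge[OF \<epsilon>] .
    ultimately show "eventually (\<lambda>t. a < ramp_stairs \<theta> \<epsilon> t) at_top"
      using \<open>a < 0\<close> by (intro always_eventually allI) (meson less_le_trans order_trans)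
  next
    fix a :: real assume "0 < a"
    then obtain K where "\<epsilon> (Suc K) < a"
      using order_tendstoD(2)[OF \<epsilon>(2) \<open>0 < a\<close>]
      by (auto simp: eventually_sequentially intro: le_SucI)
    moreover have "eventually (\<lambda>t. ramp_stairs \<theta> \<epsilon> t \<le> \<epsilon> (Suc K)) at_top"
      using eventually_ge_at_top[of "\<theta> K + 1"] by eventually_elim (rule ramp_stairs_le[OF \<theta> \<epsilon>(1)])
    ultimately show "eventually (\<lambda>t. ramp_stairs \<theta> \<epsilon> t < a) at_top"
      by (auto elim: eventually_mono)
  qed
qed

lemma class_L_majorant:
  fixes P :: "real \<Rightarrow> real \<Rightarrow> bool"
  assumes B: "0 < B" and bound: "\<And>t. t \<in> T \<Longrightarrow> P t B"
    and P_mono: "\<And>t b b'. P t b \<Longrightarrow> b \<le> b' \<Longrightarrow> P t b'"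
    and eventually_P: "\<And>\<epsilon>. 0 < \<epsilon> \<Longrightarrow> \<exists>\<tau>. \<forall>t\<in>T. \<tau> \<le> t \<longrightarrow> P t \<epsilon>"
  obtains g where "class_L g" "\<And>t. t \<in> T \<Longrightarrow> P t (g t)"
proof -
  define \<epsilon> where "\<epsilon> k = B / real (Suc k)" for k
  have \<epsilon>_pos: "0 < \<epsilon> k" for k unfolding \<epsilon>_def using B by simp
  have \<epsilon>_dec: "decseq \<epsilon>"
    unfolding \<epsilon>_def using B by (intro decseq_SucI divide_left_mono) auto
  have \<epsilon>_lim: "\<epsilon> \<longlonglongrightarrow> 0"
    using tendsto_mult_right_zero[OF LIMSEQ_inverse_real_of_nat, of B]
    unfolding \<epsilon>_def by (simp add: divide_inverse)
  have "\<forall>k. \<exists>\<tau>. \<forall>t\<in>T. \<tau> \<le> t \<longrightarrow> P t (\<epsilon> (Suc k))"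
    using eventually_P \<epsilon>_pos by blast
  then obtain \<tau> where \<tau>: "\<And>k t. t \<in> T \<Longrightarrow> \<tau> k \<le> t \<Longrightarrow> P t (\<epsilon> (Suc k))"
    by metis
  define \<theta> where "\<theta> k = real k + (\<Sum>j\<le>k. \<bar>\<tau> j\<bar>)" for k
  have \<theta>_inc: "incseq \<theta>"
    unfolding \<theta>_def by (intro monoI add_mono sum_mono2) auto
  have \<theta>_ge: "real k \<le> \<theta> k" for k
    unfolding \<theta>_def by (simp add: sum_nonneg)
  have \<theta>_ge_\<tau>: "\<tau> k \<le> \<theta> k" for k
    using member_le_sum[of k "{..k}" "\<lambda>j. \<bar>\<tau> j\<bar>"] unfolding \<theta>_def by auto
  have "class_L (ramp_stairs \<theta> \<epsilon>)"
    using \<theta>_inc \<theta>_ge \<epsilon>_dec \<epsilon>_lim by (rule class_L_ramp_stairs)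
  moreover have "P t (ramp_stairs \<theta> \<epsilon> t)" if t: "t \<in> T" for t
  proof -
    have "\<exists>K. t < \<theta> K"
      using \<theta>_ge[of "Suc (nat \<lceil>t\<rceil>)"] by (intro exI[of _ "Suc (nat \<lceil>t\<rceil>)"]) linarith
    \<comment> \<open>At \<open>t\<close> the staircase is still above \<open>\<epsilon> K\<close>, and \<open>\<tau> (K - 1) \<le> \<theta> (K - 1) \<le> t\<close>.\<close>
    define K where "K = (LEAST K. t < \<theta> K)"
    have K: "t < \<theta> K"
      unfolding K_def by (rule LeastI_ex) fact
    have K_least: "\<theta> j \<le> t" if "j < K" for j
      using not_less_Least[OF that[unfolded K_def]] by simp
    have "P t (\<epsilon> K)"
    proof (cases K)
      case 0
      then show ?thesis using bound[OF t] unfolding \<epsilon>_def by simp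
    next
      case (Suc j)
      then show ?thesis using \<tau>[OF t] \<theta>_ge_\<tau>[of j] K_least[of j] by simp
    qed
    moreover have "\<epsilon> K \<le> ramp_stairs \<theta> \<epsilon> t"
      using K by (intro ramp_stairs_ge \<theta>_inc \<theta>_ge \<epsilon>_dec) simp
    ultimately show ?thesis by (rule P_mono)
  qed
  ultimately show thesis by (rule that)
qed

section \<open>Output stability properties\<close>

lemma time_domain_nonneg: "time_domain T \<Longrightarrow> t \<in> T \<Longrightarrow> 0 \<le> t"
  unfolding time_domain_def by auto

lemma time_domain_unbounded:
  assumes "time_domain T"
  shows "\<exists>\<tau>\<in>T. a \<le> \<tau>"
  using assms unfolding time_domain_def
proof
  assume "T = {0..}"
  then show ?thesis by (intro bexI[of _ "max a 0"]) auto
next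
  assume "T = range real"
  then show ?thesis by (intro bexI[of _ "real (nat \<lceil>a\<rceil>)"]) (auto simp: real_nat_ceiling_ge)
qed

lemma normed_input_space_nonneg: "normed_input_space T UU nU \<Longrightarrow> u \<in> UU \<Longrightarrow> 0 \<le> nU u"
  unfolding normed_input_space_def by blast

lemma OGUAG_imp_OUAG:
  assumes "OGUAG T UU nU \<phi> h"
  shows "OUAG T UU nU \<phi> h"
proof -
  obtain \<gamma> where \<gamma>: "class_Kinf \<gamma>" and attract: "\<And>\<epsilon> r. 0 < \<epsilon> \<Longrightarrow> 0 < r \<Longrightarrow>
      \<exists>\<tau>\<in>T. \<forall>x u t. norm x < r \<and> u \<in> UU \<and> t \<in> T \<and> t \<ge> \<tau>
        \<longrightarrow> norm (sys_output \<phi> h t x u) \<le> \<epsilon> + \<gamma> (nU u)"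
    using assms unfolding OGUAG_def by blast
  have "\<exists>\<tau>\<in>T. \<forall>x u t. norm x < r \<and> u \<in> UU \<and> nU u < s \<and> t \<in> T \<and> t \<ge> \<tau>
      \<longrightarrow> norm (sys_output \<phi> h t x u) \<le> \<epsilon> + \<gamma> (nU u)" if "0 < \<epsilon>" "0 < r" for \<epsilon> r s
    using attract[OF that] by blast
  then show ?thesis unfolding OUAG_def using \<gamma> by blast
qed

lemma OUGB_imp_BORS:
  assumes nU: "normed_input_space T UU nU" and "OUGB T UU nU \<phi> h"
  shows "BORS T UU nU \<phi> h"
proof -
  obtain \<sigma> \<gamma> c where \<sigma>: "class_Kinf \<sigma>" and \<gamma>: "class_Kinf \<gamma>"
    and bound: "\<And>x u t. u \<in> UU \<Longrightarrow> t \<in> T \<Longrightarrow> norm (sys_output \<phi> h t x u) \<le> \<sigma> (norm x) + \<gamma> (nU u) + c"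
    using assms(2) unfolding OUGB_def by blast
  have "norm (sys_output \<phi> h t x u) \<le> \<sigma> C + \<gamma> C + c"
    if "norm x < C" "u \<in> UU" "nU u < C" "t \<in> T" for C x u t
  proof -
    have "\<sigma> (norm x) \<le> \<sigma> C" "\<gamma> (nU u) \<le> \<gamma> C"
      using \<sigma> \<gamma> that normed_input_space_nonneg[OF nU]
      by (auto intro: class_K_mono[of \<sigma>] class_K_mono[of \<gamma>] simp: class_Kinf_def)
    then show ?thesis using bound[OF that(2,4), of x] by simp
  qed
  then show ?thesis unfolding BORS_def by blast
qed

lemma OUAG_BORS_bounded:
  assumes nU: "normed_input_space T UU nU" and "OUAG T UU nU \<phi> h" and "BORS T UU nU \<phi> h"
  shows "\<exists>M. \<forall>x u t. norm x < R \<and> u \<in> UU \<and> nU u < R \<and> t \<in> T \<longrightarrow> norm (sys_output \<phi> h t x u) \<le> M"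
proof (cases "0 < R")
  case True
  obtain \<gamma> where \<gamma>: "class_Kinf \<gamma>" and attract: "\<And>\<epsilon> r s. 0 < \<epsilon> \<Longrightarrow> 0 < r \<Longrightarrow> 0 < s \<Longrightarrow>
      \<exists>\<tau>\<in>T. \<forall>x u t. norm x < r \<and> u \<in> UU \<and> nU u < s \<and> t \<in> T \<and> t \<ge> \<tau>
        \<longrightarrow> norm (sys_output \<phi> h t x u) \<le> \<epsilon> + \<gamma> (nU u)"
    using assms(2) unfolding OUAG_def by blast
  obtain \<tau> where "\<tau> \<in> T" and late: "\<And>x u t. norm x < R \<Longrightarrow> u \<in> UU \<Longrightarrow> nU u < R \<Longrightarrow> t \<in> T \<Longrightarrow> \<tau> \<le> t
      \<Longrightarrow> norm (sys_output \<phi> h t x u) \<le> 1 + \<gamma> (nU u)"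
    using attract[of 1 R R] True by auto
  then obtain M where early: "\<And>x u t. norm x < R \<Longrightarrow> u \<in> UU \<Longrightarrow> nU u < R \<Longrightarrow> t \<in> T \<Longrightarrow> t < \<tau>
      \<Longrightarrow> norm (sys_output \<phi> h t x u) \<le> M"
    using assms(3) True unfolding BORS_def by meson
  have "norm (sys_output \<phi> h t x u) \<le> max M (1 + \<gamma> R)"
    if "norm x < R" "u \<in> UU" "nU u < R" "t \<in> T" for x u t
  proof (cases "t < \<tau>")
    case True
    then show ?thesis using early that by fastforce
  next
    case False
    have "\<gamma> (nU u) \<le> \<gamma> R"
      using \<gamma> that normed_input_space_nonneg[OF nU]
      by (auto intro: class_K_mono[of \<gamma>] simp: class_Kinf_def)
    then show ?thesis using late[OF that] False by simp
  qed
  then show ?thesis by blast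
next
  case False
  then show ?thesis by (auto dest: le_less_trans[OF norm_ge_zero])
qed

lemma OUGB_if_bounded:
  assumes nU: "normed_input_space T UU nU"
    and bounded: "\<And>R. \<exists>M. \<forall>x u t. norm x < R \<and> u \<in> UU \<and> nU u < R \<and> t \<in> T
      \<longrightarrow> norm (sys_output \<phi> h t x u) \<le> M"
  shows "OUGB T UU nU \<phi> h"
proof -
  have "\<forall>n::nat. \<exists>M. \<forall>x u t. norm x < real n + 1 \<and> u \<in> UU \<and> nU u < real n + 1 \<and> t \<in> T
      \<longrightarrow> norm (sys_output \<phi> h t x u) \<le> M"
    using bounded by blast
  then obtain M where M: "\<And>n x u t. norm x < real n + 1 \<Longrightarrow> u \<in> UU \<Longrightarrow> nU u < real n + 1
      \<Longrightarrow> t \<in> T \<Longrightarrow> norm (sys_output \<phi> h t x u) \<le> M n"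
    by metis
  obtain \<sigma> where \<sigma>: "class_Kinf \<sigma>" and \<sigma>_ge: "\<And>n r. real n + 1 \<le> r \<Longrightarrow> \<bar>M (Suc n)\<bar> \<le> \<sigma> r"
    using class_Kinf_majorant[of "\<lambda>n. \<bar>M (Suc n)\<bar>"] by auto
  have \<sigma>_K: "class_K \<sigma>" using \<sigma> unfolding class_Kinf_def by blast
  define c where "c = \<bar>M 0\<bar> + 1"
  have "norm (sys_output \<phi> h t x u) \<le> \<sigma> (norm x) + \<sigma> (nU u) + c"
    if u: "u \<in> UU" and t: "t \<in> T" for x u t
  proof -
    define R where "R = max (norm x) (nU u)"
    define m where "m = nat \<lfloor>R\<rfloor>"
    have R: "0 \<le> R" "norm x < real m + 1" "nU u < real m + 1"
      unfolding m_def R_def by (auto simp: le_max_iff_disj) linarith+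
    then have y: "norm (sys_output \<phi> h t x u) \<le> M m" using M u t by blast
    have \<sigma>_nonneg: "0 \<le> \<sigma> (norm x)" "0 \<le> \<sigma> (nU u)"
      using class_K_nonneg[OF \<sigma>_K] normed_input_space_nonneg[OF nU u] by auto
    have \<sigma>_R: "\<sigma> R \<le> \<sigma> (norm x) + \<sigma> (nU u)"
      unfolding R_def using \<sigma>_nonneg by (cases "norm x \<le> nU u") (auto simp: max_def)
    show ?thesis
    proof (cases m)
      case 0
      then show ?thesis using y \<sigma>_nonneg unfolding c_def by simp
    next
      case (Suc k)
      then have "real k + 1 \<le> R" unfolding m_def using R(1) by linarith
      then show ?thesis using y \<sigma>_ge[of k R] \<sigma>_R Suc unfolding c_def by simp
    qed
  qed
  then show ?thesis
    unfolding OUGB_def using \<sigma> by (intro exI[of _ \<sigma>] exI[of _ c]) (auto simp: c_def)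
qed

lemma OUAG_OUGB_imp_OGUAG:
  assumes nU: "normed_input_space T UU nU" and "OUAG T UU nU \<phi> h" and "OUGB T UU nU \<phi> h"
  shows "OGUAG T UU nU \<phi> h"
proof -
  obtain \<gamma> where \<gamma>: "class_Kinf \<gamma>" and attract: "\<And>\<epsilon> r s. 0 < \<epsilon> \<Longrightarrow> 0 < r \<Longrightarrow> 0 < s \<Longrightarrow>
      \<exists>\<tau>\<in>T. \<forall>x u t. norm x < r \<and> u \<in> UU \<and> nU u < s \<and> t \<in> T \<and> t \<ge> \<tau>
        \<longrightarrow> norm (sys_output \<phi> h t x u) \<le> \<epsilon> + \<gamma> (nU u)"
    using assms(2) unfolding OUAG_def by blast
  obtain \<sigma> \<gamma>' c where \<sigma>: "class_Kinf \<sigma>" and \<gamma>': "class_Kinf \<gamma>'" and "c > 0"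
    and bound: "\<And>x u t. u \<in> UU \<Longrightarrow> t \<in> T \<Longrightarrow>
      norm (sys_output \<phi> h t x u) \<le> \<sigma> (norm x) + \<gamma>' (nU u) + c"
    using assms(3) unfolding OUGB_def by blast
  have \<gamma>_K: "class_K \<gamma>" and \<gamma>'_K: "class_K \<gamma>'" and \<sigma>_K: "class_K \<sigma>"
    using \<gamma> \<gamma>' \<sigma> unfolding class_Kinf_def by auto
  define \<rho> where "\<rho> v = v + (\<gamma> v + \<gamma>' v)" for v
  have \<rho>: "class_Kinf \<rho>"
    unfolding \<rho>_def by (intro class_Kinf_add class_Kinf_ident class_K_add \<gamma>_K \<gamma>'_K)
  have "\<exists>\<tau>\<in>T. \<forall>x u t. norm x < r \<and> u \<in> UU \<and> t \<in> T \<and> t \<ge> \<tau>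
      \<longrightarrow> norm (sys_output \<phi> h t x u) \<le> \<epsilon> + \<rho> (nU u)" if \<epsilon>: "0 < \<epsilon>" and r: "0 < r" for \<epsilon> r
  proof -
    \<comment> \<open>For inputs of norm at least \<open>s\<close>, the OUGB bound on the ball of radius \<open>r\<close> is absorbed
      by the identity summand of \<open>\<rho>\<close>.\<close>
    define s where "s = \<sigma> r + c"
    have "0 < s" unfolding s_def using class_K_nonneg[OF \<sigma>_K, of r] \<open>c > 0\<close> r by simp
    then obtain \<tau> where "\<tau> \<in> T" and late: "\<And>x u t. norm x < r \<Longrightarrow> u \<in> UU \<Longrightarrow> nU u < s \<Longrightarrow> t \<in> T
        \<Longrightarrow> \<tau> \<le> t \<Longrightarrow> norm (sys_output \<phi> h t x u) \<le> \<epsilon> + \<gamma> (nU u)"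
      using attract[OF \<epsilon> r] by meson
    have "norm (sys_output \<phi> h t x u) \<le> \<epsilon> + \<rho> (nU u)"
      if x: "norm x < r" and u: "u \<in> UU" and t: "t \<in> T" "\<tau> \<le> t" for x u t
    proof -
      have "0 \<le> nU u" using normed_input_space_nonneg[OF nU u] .
      then have nonneg: "0 \<le> \<gamma> (nU u)" "0 \<le> \<gamma>' (nU u)"
        using class_K_nonneg \<gamma>_K \<gamma>'_K by auto
      show ?thesis
      proof (cases "nU u < s")
        case True
        then show ?thesis using late[OF x u True t] nonneg \<open>0 \<le> nU u\<close> unfolding \<rho>_def by simp
      next
        case False
        have "\<sigma> (norm x) \<le> \<sigma> r" using class_K_mono[OF \<sigma>_K] x by simp
        then show ?thesis
          using bound[OF u t(1), of x] False nonneg \<epsilon> unfolding \<rho>_def s_def by simp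
      qed
    qed
    then show ?thesis using \<open>\<tau> \<in> T\<close> by blast
  qed
  then show ?thesis unfolding OGUAG_def using \<rho> by blast
qed

lemma OGUAG_OUGB_decay_on_balls:
  fixes \<phi> :: "real \<Rightarrow> 'x::real_normed_vector \<Rightarrow> (real \<Rightarrow> 'u::real_vector) \<Rightarrow> 'x"
  assumes nU: "normed_input_space T UU nU" and "OGUAG T UU nU \<phi> h" and "OUGB T UU nU \<phi> h"
  obtains \<gamma> where "class_Kinf \<gamma>"
    "\<And>R. \<exists>g. class_L g \<and> (\<forall>x u t. norm x \<le> R \<and> u \<in> UU \<and> t \<in> T
       \<longrightarrow> norm (sys_output \<phi> h t x u) \<le> g t + \<gamma> (nU u))"
proof -
  obtain \<gamma>1 where \<gamma>1: "class_Kinf \<gamma>1" and attract: "\<And>\<epsilon> r. 0 < \<epsilon> \<Longrightarrow> 0 < r \<Longrightarrow>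
      \<exists>\<tau>\<in>T. \<forall>x u t. norm x < r \<and> u \<in> UU \<and> t \<in> T \<and> t \<ge> \<tau>
        \<longrightarrow> norm (sys_output \<phi> h t x u) \<le> \<epsilon> + \<gamma>1 (nU u)"
    using assms(2) unfolding OGUAG_def by blast
  obtain \<sigma> \<gamma>2 c where \<sigma>: "class_Kinf \<sigma>" and \<gamma>2: "class_Kinf \<gamma>2" and "c > 0"
    and bound: "\<And>x u t. u \<in> UU \<Longrightarrow> t \<in> T \<Longrightarrow>
      norm (sys_output \<phi> h t x u) \<le> \<sigma> (norm x) + \<gamma>2 (nU u) + c"
    using assms(3) unfolding OUGB_def by blast
  have \<gamma>1_K: "class_K \<gamma>1" and \<gamma>2_K: "class_K \<gamma>2" and \<sigma>_K: "class_K \<sigma>"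
    using \<gamma>1 \<gamma>2 \<sigma> unfolding class_Kinf_def by auto
  define \<gamma> where "\<gamma> v = \<gamma>1 v + \<gamma>2 v" for v
  have "class_Kinf \<gamma>" unfolding \<gamma>_def using \<gamma>1 \<gamma>2_K by (rule class_Kinf_add)
  moreover have "\<exists>g. class_L g \<and> (\<forall>x u t. norm x \<le> R \<and> u \<in> UU \<and> t \<in> T
       \<longrightarrow> norm (sys_output \<phi> h t x u) \<le> g t + \<gamma> (nU u))" for R
  proof -
    define P where "P t b \<longleftrightarrow> (\<forall>x u. norm x \<le> R \<and> u \<in> UU
      \<longrightarrow> norm (sys_output \<phi> h t x u) \<le> b + \<gamma> (nU u))" for t b
    have \<gamma>_nonneg: "0 \<le> \<gamma>1 (nU u)" "0 \<le> \<gamma>2 (nU u)" if "u \<in> UU" for u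
      using class_K_nonneg \<gamma>1_K \<gamma>2_K normed_input_space_nonneg[OF nU that] by auto
    obtain g where "class_L g" "\<And>t. t \<in> T \<Longrightarrow> P t (g t)"
    proof (rule class_L_majorant)
      show "0 < \<sigma> \<bar>R\<bar> + c" using class_K_nonneg[OF \<sigma>_K, of "\<bar>R\<bar>"] \<open>c > 0\<close> by simp
      show "P t (\<sigma> \<bar>R\<bar> + c)" if "t \<in> T" for t
        unfolding P_def
      proof (intro allI impI)
        fix x :: 'x and u assume xu: "norm x \<le> R \<and> u \<in> UU"
        then have "\<sigma> (norm x) \<le> \<sigma> \<bar>R\<bar>" by (intro class_K_mono[OF \<sigma>_K]) auto
        then show "norm (sys_output \<phi> h t x u) \<le> \<sigma> \<bar>R\<bar> + c + \<gamma> (nU u)"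
          using bound[of u t x] \<gamma>_nonneg[of u] xu that unfolding \<gamma>_def by simp
      qed
      show "P t b'" if "P t b" "b \<le> b'" for t b b'
        using that unfolding P_def by force
      show "\<exists>\<tau>. \<forall>t\<in>T. \<tau> \<le> t \<longrightarrow> P t \<epsilon>" if \<epsilon>: "0 < \<epsilon>" for \<epsilon>
      proof -
        obtain \<tau> where late: "\<forall>x u t. norm x < \<bar>R\<bar> + 1 \<and> u \<in> UU \<and> t \<in> T \<and> t \<ge> \<tau>
            \<longrightarrow> norm (sys_output \<phi> h t x u) \<le> \<epsilon> + \<gamma>1 (nU u)"
          using attract[OF \<epsilon>, of "\<bar>R\<bar> + 1"] by force
        have "P t \<epsilon>" if "t \<in> T" "\<tau> \<le> t" for t
          unfolding P_def
        proof (intro allI impI)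
          fix x :: 'x and u assume xu: "norm x \<le> R \<and> u \<in> UU"
          then have "norm (sys_output \<phi> h t x u) \<le> \<epsilon> + \<gamma>1 (nU u)"
            using late that by force
          then show "norm (sys_output \<phi> h t x u) \<le> \<epsilon> + \<gamma> (nU u)"
            using \<gamma>_nonneg[of u] xu unfolding \<gamma>_def by simp
        qed
        then show ?thesis by blast
      qed
    qed blast
    then show ?thesis unfolding P_def by blast
  qed
  ultimately show thesis by (rule that)
qed

lemma OGUAG_OUGB_imp_OCAG:
  assumes T: "time_domain T" and nU: "normed_input_space T UU nU"
    and "OGUAG T UU nU \<phi> h" and "OUGB T UU nU \<phi> h"
  shows "OCAG T UU nU \<phi> h"
proof -
  obtain \<gamma> where \<gamma>: "class_Kinf \<gamma>" and decay: "\<And>R. \<exists>g. class_L g \<and> (\<forall>x u t. norm x \<le> R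
      \<and> u \<in> UU \<and> t \<in> T \<longrightarrow> norm (sys_output \<phi> h t x u) \<le> g t + \<gamma> (nU u))"
    using OGUAG_OUGB_decay_on_balls[OF nU assms(3,4)] by blast
  have "\<forall>n::nat. \<exists>g. class_L g \<and> (\<forall>x u t. norm x \<le> real n + 1
      \<and> u \<in> UU \<and> t \<in> T \<longrightarrow> norm (sys_output \<phi> h t x u) \<le> g t + \<gamma> (nU u))"
    using decay by blast
  from choice[OF this] obtain G where G: "\<forall>n. class_L (G n) \<and> (\<forall>x u t. norm x \<le> real n + 1
      \<and> u \<in> UU \<and> t \<in> T \<longrightarrow> norm (sys_output \<phi> h t x u) \<le> G n t + \<gamma> (nU u))"
    by blast
  then have G_L: "\<And>n. class_L (G n)" and G_bound: "\<And>n x u t. norm x \<le> real n + 1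
      \<Longrightarrow> u \<in> UU \<Longrightarrow> t \<in> T \<Longrightarrow> norm (sys_output \<phi> h t x u) \<le> G n t + \<gamma> (nU u)"
    by blast+
  obtain \<beta> where \<beta>: "class_KL \<beta>" and \<beta>_ge: "\<And>n s t. real n + 1 \<le> s \<Longrightarrow> 0 \<le> t \<Longrightarrow> G n t \<le> \<beta> s t"
    using class_KL_majorant[of G, OF G_L] by blast
  have "norm (sys_output \<phi> h t x u) \<le> \<beta> (norm x + 1) t + \<gamma> (nU u)"
    if u: "u \<in> UU" and t: "t \<in> T" for x u t
  proof -
    define n where "n = nat \<lfloor>norm x\<rfloor>"
    have "real n = of_int \<lfloor>norm x\<rfloor>" unfolding n_def by simp
    then have n: "norm x \<le> real n + 1" "real n + 1 \<le> norm x + 1" by linarith+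
    have "norm (sys_output \<phi> h t x u) \<le> G n t + \<gamma> (nU u)"
      using G_bound[OF n(1) u t] .
    also have "G n t \<le> \<beta> (norm x + 1) t"
      using \<beta>_ge[OF n(2) time_domain_nonneg[OF T t]] .
    finally show ?thesis by simp
  qed
  then show ?thesis
    unfolding OCAG_def using \<beta> \<gamma> by (intro exI[of _ \<beta>] exI[of _ \<gamma>] exI[of _ "1::real"]) auto
qed

lemma OCAG_imp_OGUAG:
  assumes T: "time_domain T" and "OCAG T UU nU \<phi> h"
  shows "OGUAG T UU nU \<phi> h"
proof -
  obtain \<beta> \<gamma> c where \<beta>: "class_KL \<beta>" and \<gamma>: "class_Kinf \<gamma>" and "0 \<le> c"
    and bound: "\<And>x u t. u \<in> UU \<Longrightarrow> t \<in> T \<Longrightarrow>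
      norm (sys_output \<phi> h t x u) \<le> \<beta> (norm x + c) t + \<gamma> (nU u)"
    using assms(2) unfolding OCAG_def by blast
  have "\<exists>\<tau>\<in>T. \<forall>x u t. norm x < r \<and> u \<in> UU \<and> t \<in> T \<and> t \<ge> \<tau>
      \<longrightarrow> norm (sys_output \<phi> h t x u) \<le> \<epsilon> + \<gamma> (nU u)" if "0 < \<epsilon>" "0 < r" for \<epsilon> r
  proof -
    have "class_L (\<beta> (r + c))" using \<beta> \<open>0 < r\<close> \<open>0 \<le> c\<close> unfolding class_KL_def by simp
    then have "eventually (\<lambda>t. \<beta> (r + c) t < \<epsilon>) at_top"
      using \<open>0 < \<epsilon>\<close> unfolding class_L_def by (blast intro: order_tendstoD)
    then obtain A where A: "\<And>t. A \<le> t \<Longrightarrow> \<beta> (r + c) t < \<epsilon>"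
      by (auto simp: eventually_at_top_linorder)
    obtain \<tau> where "\<tau> \<in> T" "A \<le> \<tau>" using time_domain_unbounded[OF T] by blast
    have "norm (sys_output \<phi> h t x u) \<le> \<epsilon> + \<gamma> (nU u)"
      if "norm x < r" "u \<in> UU" "t \<in> T" "\<tau> \<le> t" for x u t
    proof -
      have "\<beta> (norm x + c) t \<le> \<beta> (r + c) t"
        using that \<open>0 \<le> c\<close> time_domain_nonneg[OF T]
        by (intro class_K_mono[OF class_KL_K[OF \<beta>]]) auto
      also have "\<dots> < \<epsilon>" using A \<open>A \<le> \<tau>\<close> that by simp
      finally show ?thesis using bound[OF that(2,3), of x] by simp
    qed
    then show ?thesis using \<open>\<tau> \<in> T\<close> by blast
  qed
  then show ?thesis unfolding OGUAG_def using \<gamma> by blast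
qed

lemma OCAG_imp_OUGB:
  assumes T: "time_domain T" and "OCAG T UU nU \<phi> h"
  shows "OUGB T UU nU \<phi> h"
proof -
  obtain \<beta> \<gamma> c where \<beta>: "class_KL \<beta>" and \<gamma>: "class_Kinf \<gamma>" and "0 \<le> c"
    and bound: "\<And>x u t. u \<in> UU \<Longrightarrow> t \<in> T \<Longrightarrow>
      norm (sys_output \<phi> h t x u) \<le> \<beta> (norm x + c) t + \<gamma> (nU u)"
    using assms(2) unfolding OCAG_def by blast
  have \<beta>0: "class_K (\<lambda>r. \<beta> r 0)" using class_KL_K[OF \<beta>] by simp
  \<comment> \<open>\<open>\<beta> (\<cdot>) 0\<close> need not be unbounded, hence the identity summand.\<close>
  define \<sigma> where "\<sigma> r = r + \<beta> (2 * r) 0" for r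
  have \<sigma>: "class_Kinf \<sigma>"
    unfolding \<sigma>_def by (intro class_Kinf_add class_Kinf_ident class_K_scale[OF \<beta>0, of 2, simplified])
  have "norm (sys_output \<phi> h t x u) \<le> \<sigma> (norm x) + \<gamma> (nU u) + (\<beta> (2 * c) 0 + 1)"
    if "u \<in> UU" "t \<in> T" for x u t
  proof -
    have "\<beta> (norm x + c) t \<le> \<beta> (norm x + c) 0"
      using class_KL_antimono[OF \<beta>] \<open>0 \<le> c\<close> time_domain_nonneg[OF T \<open>t \<in> T\<close>] by simp
    also have "\<dots> \<le> \<beta> (2 * norm x) 0 + \<beta> (2 * c) 0"
      using class_K_add_le[OF \<beta>0] \<open>0 \<le> c\<close> by simp
    finally show ?thesis using bound[OF that, of x] norm_ge_zero[of x] unfolding \<sigma>_def by linarith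
  qed
  moreover have "0 < \<beta> (2 * c) 0 + 1" using class_K_nonneg[OF \<beta>0, of "2 * c"] \<open>0 \<le> c\<close> by simp
  ultimately show ?thesis unfolding OUGB_def using \<sigma> \<gamma> by blast
qed

lemma OCAG_imp_IOpS:
  assumes T: "time_domain T" and "OCAG T UU nU \<phi> h"
  shows "IOpS T UU nU \<phi> h"
proof -
  obtain \<beta> \<gamma> c where \<beta>: "class_KL \<beta>" and \<gamma>: "class_Kinf \<gamma>" and "0 \<le> c"
    and bound: "\<And>x u t. u \<in> UU \<Longrightarrow> t \<in> T \<Longrightarrow>
      norm (sys_output \<phi> h t x u) \<le> \<beta> (norm x + c) t + \<gamma> (nU u)"
    using assms(2) unfolding OCAG_def by blast
  have "norm (sys_output \<phi> h t x u) \<le> \<beta> (2 * norm x) t + \<gamma> (nU u) + \<beta> (2 * c) 0"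
    if "u \<in> UU" "t \<in> T" for x u t
  proof -
    have "0 \<le> t" using time_domain_nonneg[OF T \<open>t \<in> T\<close>] .
    then have "\<beta> (norm x + c) t \<le> \<beta> (2 * norm x) t + \<beta> (2 * c) t"
      using class_K_add_le[OF class_KL_K[OF \<beta>]] \<open>0 \<le> c\<close> by simp
    also have "\<beta> (2 * c) t \<le> \<beta> (2 * c) 0"
      using class_KL_antimono[OF \<beta>] \<open>0 \<le> c\<close> \<open>0 \<le> t\<close> by simp
    finally show ?thesis using bound[OF that, of x] by simp
  qed
  moreover have "0 \<le> \<beta> (2 * c) 0" using class_K_nonneg[OF class_KL_K[OF \<beta>]] \<open>0 \<le> c\<close> by simp
  ultimately show ?thesis
    unfolding IOpS_def using class_KL_scale[OF \<beta>, of 2] \<gamma>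
    by (intro exI[of _ "\<lambda>r. \<beta> (2 * r)"] exI[of _ \<gamma>] exI[of _ "\<beta> (2 * c) 0"]) auto
qed

theorem proposition1:
  fixes T :: "real set"
    and UU :: "(real \<Rightarrow> 'u::real_vector) set"
    and nU :: "(real \<Rightarrow> 'u) \<Rightarrow> real"
    and \<phi> :: "real \<Rightarrow> 'x::real_normed_vector \<Rightarrow> (real \<Rightarrow> 'u) \<Rightarrow> 'x"
    and h :: "'x \<Rightarrow> 'u \<Rightarrow> 'y::real_normed_vector"
  assumes "control_system T UU nU \<phi>"
  shows "((OUAG T UU nU \<phi> h \<and> BORS T UU nU \<phi> h) \<longleftrightarrow> (OGUAG T UU nU \<phi> h \<and> OUGB T UU nU \<phi> h))
       \<and> ((OGUAG T UU nU \<phi> h \<and> OUGB T UU nU \<phi> h) \<longleftrightarrow> OCAG T UU nU \<phi> h)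
       \<and> (OCAG T UU nU \<phi> h \<longrightarrow> IOpS T UU nU \<phi> h)"
proof -
  have T: "time_domain T" and nU: "normed_input_space T UU nU"
    using assms unfolding control_system_def by simp_all
  have "OUGB T UU nU \<phi> h" if "OUAG T UU nU \<phi> h" "BORS T UU nU \<phi> h"
    using OUGB_if_bounded[OF nU OUAG_BORS_bounded[OF nU that]] .
  then have "(OUAG T UU nU \<phi> h \<and> BORS T UU nU \<phi> h) \<longleftrightarrow> (OGUAG T UU nU \<phi> h \<and> OUGB T UU nU \<phi> h)"
    using OUAG_OUGB_imp_OGUAG[OF nU] OGUAG_imp_OUAG OUGB_imp_BORS[OF nU] by blast
  moreover have "(OGUAG T UU nU \<phi> h \<and> OUGB T UU nU \<phi> h) \<longleftrightarrow> OCAG T UU nU \<phi> h"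
    using OGUAG_OUGB_imp_OCAG[OF T nU] OCAG_imp_OGUAG[OF T] OCAG_imp_OUGB[OF T] by blast
  ultimately show ?thesis using OCAG_imp_IOpS[OF T] by blast
qed

end
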